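(* Let $n\ge 4$ and $1\le k<\frac{n}{2}$ be integers and let $D$ be the diameter of $B(n,k)$. If $n\neq 2k+1$ then $D=2k+2$; if $n=2k+1$ then $D=2k+1$.
   Context: For integers $n\ge 4$ and $1\le k<\frac n2$, let $[n]=\{1,\dots,n\}$. The graph $B(n,k)$ has vertex set $V=\{v\subset[n] : |v|\in\{k,k+1\}\}$, and two vertices $v,w$ are adjacent iff $v\subset w$ or $w\subset v$. *)

theory Defs
  imports Main "HOL-Library.Extended_Nat"
begin

definition B_verts :: "nat \<Rightarrow> nat \<Rightarrow> nat set set" where
  "B_verts n k = {v. v \<subseteq> {1..n} \<and> (card v = k \<or> card v = k + 1)}"

definition B_adj :: "nat \<Rightarrow> nat \<Rightarrow> nat set \<Rightarrow> nat set \<Rightarrow> bool" where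
  "B_adj n k v w \<longleftrightarrow> v \<in> B_verts n k \<and> w \<in> B_verts n k \<and> (v \<subset> w \<or> w \<subset> v)"

definition B_walk :: "nat \<Rightarrow> nat \<Rightarrow> nat set list \<Rightarrow> bool" where
  "B_walk n k xs \<longleftrightarrow> xs \<noteq> [] \<and> set xs \<subseteq> B_verts n k \<and>
     (\<forall>i. i + 1 < length xs \<longrightarrow> B_adj n k (xs ! i) (xs ! (i + 1)))"

text \<open>Graph distance (infinite if no walk exists) and diameter.\<close>

definition B_dist :: "nat \<Rightarrow> nat \<Rightarrow> nat set \<Rightarrow> nat set \<Rightarrow> enat" where
  "B_dist n k u v = (INF xs \<in> {xs. B_walk n k xs \<and> hd xs = u \<and> last xs = v}.
                        enat (length xs - 1))"

definition B_diam :: "nat \<Rightarrow> nat \<Rightarrow> enat" where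
  "B_diam n k = (SUP u \<in> B_verts n k. SUP v \<in> B_verts n k. B_dist n k u v)"

end

theory Submission
  imports Defs
begin

text \<open>The distance between two vertices of \<open>B(n,k)\<close> is the size of their symmetric
  difference: an edge adds or removes a single element, and conversely from a \<open>k\<close>-set
  \<open>u \<noteq> v\<close> one can step towards \<open>v\<close> by adding an element of \<open>v - u\<close>, from a \<open>(k+1)\<close>-set
  by removing an element of \<open>u - v\<close>. So the diameter is the largest possible
  \<open>card (sym_diff u v)\<close>, which is at most \<open>card u + card v \<le> 2k + 2\<close> and at most \<open>n\<close>;
  two disjoint vertices of total size \<open>min (2k+2) n\<close> attain this bound.\<close>

lemma finite_B_vert: "v \<in> B_verts n k \<Longrightarrow> finite v"
  unfolding B_verts_def using finite_subset by blast

lemma B_walk_singleton [simp]: "B_walk n k [x] \<longleftrightarrow> x \<in> B_verts n k"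
  unfolding B_walk_def by auto

lemma B_walk_Cons_Cons [simp]:
  "B_walk n k (x # y # ys) \<longleftrightarrow> B_adj n k x y \<and> B_walk n k (y # ys)"
proof -
  have "(\<forall>i. i + 1 < length (x # y # ys) \<longrightarrow>
          B_adj n k ((x # y # ys) ! i) ((x # y # ys) ! (i + 1))) \<longleftrightarrow>
        B_adj n k x y \<and>
        (\<forall>i. i + 1 < length (y # ys) \<longrightarrow> B_adj n k ((y # ys) ! i) ((y # ys) ! (i + 1)))"
    (is "?all \<longleftrightarrow> _")
  proof
    assume ?all
    then show "B_adj n k x y \<and> (\<forall>i. i + 1 < length (y # ys) \<longrightarrow>
                 B_adj n k ((y # ys) ! i) ((y # ys) ! (i + 1)))"
      by (metis (no_types, lifting) add_Suc One_nat_def Suc_less_eq add_0 length_Cons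
          nth_Cons_0 nth_Cons_Suc zero_less_Suc)
  qed (auto simp: less_Suc_eq_0_disj nth_Cons split: nat.split)
  then show ?thesis
    unfolding B_walk_def B_adj_def by auto
qed

lemma card_sym_diff_triangle:
  assumes "finite a" "finite b" "finite c"
  shows "card (sym_diff a c) \<le> card (sym_diff a b) + card (sym_diff b c)"
proof -
  have "card (sym_diff a c) \<le> card (sym_diff a b \<union> sym_diff b c)"
    by (rule card_mono) (use assms in auto)
  also have "\<dots> \<le> card (sym_diff a b) + card (sym_diff b c)"
    by (rule card_Un_le)
  finally show ?thesis .
qed

lemma card_sym_diff_psubset:
  assumes "a \<subset> b" "finite b" "card b = card a + 1"
  shows "card (sym_diff a b) = 1"
proof -
  have "sym_diff a b = b - a"
    using assms(1) by auto
  then show ?thesis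
    using assms card_Diff_subset[of a b] finite_subset[of a b] by auto
qed

lemma card_sym_diff_B_adj:
  assumes "B_adj n k a b"
  shows "card (sym_diff a b) = 1"
proof -
  have fin: "finite a" "finite b"
    using assms finite_B_vert unfolding B_adj_def by blast+
  have card: "card a = k \<or> card a = k + 1" "card b = k \<or> card b = k + 1"
    using assms unfolding B_adj_def B_verts_def by auto
  consider "a \<subset> b" | "b \<subset> a"
    using assms unfolding B_adj_def by blast
  then show ?thesis
  proof cases
    case 1
    then show ?thesis
      using card psubset_card_mono[OF fin(2) 1] by (intro card_sym_diff_psubset) auto
  next
    case 2
    then have "card (sym_diff b a) = 1"
      using card psubset_card_mono[OF fin(1) 2] by (intro card_sym_diff_psubset) auto
    then show ?thesis
      by (simp add: Un_commute)
  qed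
qed

lemma card_sym_diff_le_B_walk_length:
  "B_walk n k xs \<Longrightarrow> card (sym_diff (hd xs) (last xs)) \<le> length xs - 1"
proof (induction xs rule: induct_list012)
  case 1
  then show ?case by (simp add: B_walk_def)
next
  case (2 x)
  then show ?case by simp
next
  case (3 x y ys)
  have adj: "B_adj n k x y" and walk: "B_walk n k (y # ys)"
    using "3.prems" by auto
  have "last (y # ys) \<in> B_verts n k"
    using walk unfolding B_walk_def by auto
  then have "card (sym_diff x (last (y # ys)))
      \<le> card (sym_diff x y) + card (sym_diff y (last (y # ys)))"
    using adj finite_B_vert unfolding B_adj_def by (blast intro: card_sym_diff_triangle)
  then show ?case
    using card_sym_diff_B_adj[OF adj] "3.IH"(2)[OF walk] by simp
qed

lemma B_adj_step_towards:
  assumes u: "u \<in> B_verts n k" and v: "v \<in> B_verts n k" and "u \<noteq> v"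
  obtains u' where "B_adj n k u u'" "card (sym_diff u' v) + 1 = card (sym_diff u v)"
proof -
  have fin: "finite u" "finite v"
    using u v finite_B_vert by blast+
  have step: "card (sym_diff u' v) + 1 = card (sym_diff u v)"
    if "x \<in> sym_diff u v" "sym_diff u' v = sym_diff u v - {x}" for u' x
  proof -
    have "card (sym_diff u v) > 0"
      using that(1) fin by (auto simp: card_gt_0_iff)
    then show ?thesis
      using that fin by (simp add: card_Diff_singleton)
  qed
  consider "card u = k" | "card u = k + 1"
    using u unfolding B_verts_def by blast
  then show ?thesis
  proof cases
    case 1
    have "\<not> v \<subseteq> u"
      using 1 v fin \<open>u \<noteq> v\<close> card_seteq[of u v] unfolding B_verts_def by auto
    then obtain x where x: "x \<in> v" "x \<notin> u" by blast
    have "insert x u \<in> B_verts n k"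
      using x u v 1 fin unfolding B_verts_def by auto
    then have "B_adj n k u (insert x u)"
      using u x unfolding B_adj_def by auto
    moreover have "sym_diff (insert x u) v = sym_diff u v - {x}"
      using x by auto
    ultimately show ?thesis
      using that step x by blast
  next
    case 2
    have "\<not> u \<subseteq> v"
      using 2 v fin \<open>u \<noteq> v\<close> card_seteq[of v u] unfolding B_verts_def by auto
    then obtain x where x: "x \<in> u" "x \<notin> v" by blast
    have "u - {x} \<in> B_verts n k"
      using x u 2 fin unfolding B_verts_def by auto
    then have "B_adj n k u (u - {x})"
      using u x unfolding B_adj_def by auto
    moreover have "sym_diff (u - {x}) v = sym_diff u v - {x}"
      using x by auto
    ultimately show ?thesis
      using that step x by blast
  qed
qed

lemma B_walk_of_card_sym_diff:
  assumes "u \<in> B_verts n k" "v \<in> B_verts n k"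
  shows "\<exists>xs. B_walk n k xs \<and> hd xs = u \<and> last xs = v \<and>
           length xs = card (sym_diff u v) + 1"
  using assms
proof (induction "card (sym_diff u v)" arbitrary: u)
  case 0
  have "finite (sym_diff u v)"
    using "0.prems" finite_B_vert by blast
  then have "u = v"
    using "0.hyps" by auto
  then show ?case
    using "0.prems" by (intro exI[of _ "[u]"]) simp
next
  case (Suc d)
  have "u \<noteq> v"
    using Suc.hyps(2) by auto
  then obtain u' where adj: "B_adj n k u u'" and card: "card (sym_diff u' v) + 1 = Suc d"
    unfolding Suc.hyps(2) by (rule B_adj_step_towards[OF Suc.prems])
  have "u' \<in> B_verts n k"
    using adj unfolding B_adj_def by blast
  moreover have "d = card (sym_diff u' v)"
    using card by simp
  ultimately obtain ys where ys: "B_walk n k ys" "hd ys = u'" "last ys = v" "length ys = d + 1"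
    using Suc.hyps(1) Suc.prems(2) by blast
  then obtain zs where zs: "ys = u' # zs"
    by (cases ys) auto
  have "B_walk n k (u # ys)" "last (u # ys) = v" "length (u # ys) = Suc d + 1"
    using ys adj unfolding zs by simp_all
  then show ?case
    using Suc.hyps(2) by (intro exI[of _ "u # ys"]) simp
qed

theorem B_dist_eq_card_sym_diff:
  assumes "u \<in> B_verts n k" "v \<in> B_verts n k"
  shows "B_dist n k u v = enat (card (sym_diff u v))"
proof (rule antisym)
  obtain xs where "B_walk n k xs" "hd xs = u" "last xs = v"
    "length xs = card (sym_diff u v) + 1"
    using B_walk_of_card_sym_diff[OF assms] by blast
  then show "B_dist n k u v \<le> enat (card (sym_diff u v))"
    unfolding B_dist_def by (intro INF_lower2[of xs]) auto
  show "enat (card (sym_diff u v)) \<le> B_dist n k u v"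
    unfolding B_dist_def
    by (rule INF_greatest) (use card_sym_diff_le_B_walk_length in fastforce)
qed

lemma card_sym_diff_B_verts_le:
  assumes "u \<in> B_verts n k" "v \<in> B_verts n k"
  shows "card (sym_diff u v) \<le> min (2 * k + 2) n"
proof -
  have fin: "finite u" "finite v"
    using assms finite_B_vert by blast+
  have "card u \<le> k + 1" "card v \<le> k + 1" "u \<union> v \<subseteq> {1..n}"
    using assms unfolding B_verts_def by auto
  moreover have "card (sym_diff u v) \<le> card (u \<union> v)"
    by (rule card_mono) (use fin in auto)
  moreover note card_Un_le[of u v] card_mono[of "{1..n}" "u \<union> v"]
  ultimately show ?thesis
    by simp
qed

theorem B_diam_eq:
  assumes "2 * k < n"
  shows "B_diam n k = enat (min (2 * k + 2) n)"
proof (rule antisym)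
  have "B_dist n k u v \<le> enat (min (2 * k + 2) n)"
    if "u \<in> B_verts n k" "v \<in> B_verts n k" for u v
    using card_sym_diff_B_verts_le[OF that] by (simp add: B_dist_eq_card_sym_diff that)
  then show "B_diam n k \<le> enat (min (2 * k + 2) n)"
    unfolding B_diam_def by (intro SUP_least)
next
  define m where "m = min (2 * k + 2) n"
  define u v where "u = {1..k + 1}" and "v = {k + 2..m}"
  have u: "u \<in> B_verts n k" and v: "v \<in> B_verts n k"
    using assms unfolding u_def v_def m_def B_verts_def by auto
  have "sym_diff u v = {1..m}"
    using assms unfolding u_def v_def m_def by auto
  then have "enat m = B_dist n k u v"
    by (simp add: B_dist_eq_card_sym_diff u v)
  also have "\<dots> \<le> (SUP v \<in> B_verts n k. B_dist n k u v)"
    using v by (rule SUP_upper)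
  also have "\<dots> \<le> B_diam n k"
    unfolding B_diam_def using u by (rule SUP_upper)
  finally show "enat m \<le> B_diam n k" .
qed

theorem corollary3p4:
  fixes n k :: nat
  assumes "n \<ge> 4" and "1 \<le> k" and "2 * k < n"
  shows "(n \<noteq> 2 * k + 1 \<longrightarrow> B_diam n k = enat (2 * k + 2)) \<and>
         (n = 2 * k + 1 \<longrightarrow> B_diam n k = enat (2 * k + 1))"
  using B_diam_eq[OF assms(3)] assms(3) by auto

end
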